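(* Fix an integer $r\ge2$ and $\epsilon>0$. There exists $d_0$ such that for every fixed integer $d>d_0$, if $G$ is sampled from the configuration model $G^*(n,d)$ (with $nd$ even), then with probability $1-o(1)$ as $n\to\infty$, $m(G,r)\ge n\,d^{-\left(\frac{r}{r-1}+\epsilon\right)}$.
   Context: The configuration model $G^*(n,d)$: take cells $W=[n]\times[d]$, choose a uniformly random perfect matching of $W$, and for each matched pair of cells $(i,a),(j,b)$ add an edge between vertices $i$ and $j$ (the result may be a multigraph with loops and parallel edges). In bootstrap percolation the neighborhood $N(v)$ of a vertex is the set of distinct vertices $u\neq v$ joined to $v$ by at least one edge. Bootstrap percolation with threshold $r\ge 2$: given seeds $A_0\subseteq V$, $A_i=A_{i-1}\cup\{v:|N(v)\cap A_{i-1}|\ge r\}$ for $i\ge 1$, $\langle A_0\rangle=\bigcup_iA_i$; $A_0$ is contagious if $\langle A_0\rangle=V$, and $m(G,r)$ is the minimum size of a contagious set. *)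

theory Defs
  imports Complex_Main
begin

definition cells :: "nat \<Rightarrow> nat \<Rightarrow> (nat \<times> nat) set" where
  "cells n d = {0..<n} \<times> {0..<d}"

definition perfect_matchings :: "nat \<Rightarrow> nat \<Rightarrow> (nat \<times> nat) set set set" where
  "perfect_matchings n d = {M. (\<forall>e\<in>M. card e = 2 \<and> e \<subseteq> cells n d)
      \<and> (\<forall>e\<in>M. \<forall>e'\<in>M. e \<noteq> e' \<longrightarrow> e \<inter> e' = {})
      \<and> \<Union>M = cells n d}"

definition nbr :: "(nat \<times> nat) set set \<Rightarrow> nat \<Rightarrow> nat set" where
  "nbr M v = {u. u \<noteq> v \<and> (\<exists>a b. {(v, a), (u, b)} \<in> M)}"

definition bp_step :: "nat \<Rightarrow> nat \<Rightarrow> (nat \<times> nat) set set \<Rightarrow> nat set \<Rightarrow> nat set" where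
  "bp_step n r M A = A \<union> {v \<in> {0..<n}. card (nbr M v \<inter> A) \<ge> r}"

definition bp_closure :: "nat \<Rightarrow> nat \<Rightarrow> (nat \<times> nat) set set \<Rightarrow> nat set \<Rightarrow> nat set" where
  "bp_closure n r M A0 = (\<Union>i. (bp_step n r M ^^ i) A0)"

definition contagious :: "nat \<Rightarrow> nat \<Rightarrow> (nat \<times> nat) set set \<Rightarrow> nat set \<Rightarrow> bool" where
  "contagious n r M A0 \<longleftrightarrow> A0 \<subseteq> {0..<n} \<and> bp_closure n r M A0 = {0..<n}"

text \<open>m(G,r): minimum size of a contagious set (the vertex set itself is contagious).\<close>
definition min_contagious :: "nat \<Rightarrow> nat \<Rightarrow> (nat \<times> nat) set set \<Rightarrow> nat" where
  "min_contagious n r M = (LEAST k. \<exists>A. contagious n r M A \<and> card A = k)"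

definition config_prob :: "nat \<Rightarrow> nat \<Rightarrow> ((nat \<times> nat) set set \<Rightarrow> bool) \<Rightarrow> real" where
  "config_prob n d P = real (card {M \<in> perfect_matchings n d. P M}) / real (card (perfect_matchings n d))"

end

theory Submission
  imports Defs
begin

text \<open>Let K = \<lfloor>n d^-(r/(r-1)+\<epsilon>)\<rfloor>. If some set of at most K vertices is contagious, run the
  percolation from it one vertex at a time: each newly infected vertex has at least r neighbours
  among the vertices infected before it, so the first L K infected vertices span at least
  r (L - 1) K edges. A union bound over the (n choose L K) vertex sets and the choices of
  r (L - 1) K cell pairs inside them, each contained in a uniform perfect matching with probability
  1 / ((nd - 1)(nd - 3)\<cdots>), shows that the expected number of such dense sets is at most B^K,
  where B \<le> 1/2 once L is large in terms of r and \<epsilon> and d is large in terms of L.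
  As n \<rightarrow> \<infinity>, K \<rightarrow> \<infinity>.\<close>

section \<open>Perfect matchings of a finite set\<close>

definition perfect_matchings_on :: "'a set \<Rightarrow> 'a set set set" where
  "perfect_matchings_on S = {M. (\<forall>e\<in>M. card e = 2 \<and> e \<subseteq> S)
      \<and> (\<forall>e\<in>M. \<forall>e'\<in>M. e \<noteq> e' \<longrightarrow> e \<inter> e' = {}) \<and> \<Union>M = S}"

lemma perfect_matchings_eq_on_cells: "perfect_matchings n d = perfect_matchings_on (cells n d)"
  unfolding perfect_matchings_def perfect_matchings_on_def by simp

lemma finite_perfect_matchings_on: "finite S \<Longrightarrow> finite (perfect_matchings_on S)"
proof -
  assume "finite S"
  moreover have "perfect_matchings_on S \<subseteq> Pow (Pow S)"
    unfolding perfect_matchings_on_def by auto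
  ultimately show ?thesis by (meson finite_Pow_iff finite_subset)
qed

lemma card_perfect_matchings_on_inj_le:
  assumes "inj_on f S" "f ` S = T" "finite T"
  shows "card (perfect_matchings_on S) \<le> card (perfect_matchings_on T)"
proof -
  let ?g = "\<lambda>M. (`) f ` M"
  have inj: "inj_on ?g (perfect_matchings_on S)"
  proof (rule inj_onI)
    fix M1 M2 assume M: "M1 \<in> perfect_matchings_on S" "M2 \<in> perfect_matchings_on S" "?g M1 = ?g M2"
    have "M1 \<subseteq> Pow S" "M2 \<subseteq> Pow S" using M(1,2) unfolding perfect_matchings_on_def by auto
    then show "M1 = M2"
      using M(3) inj_on_image_Pow[OF assms(1)] by (simp add: inj_on_image_eq_iff)
  qed
  have "?g ` perfect_matchings_on S \<subseteq> perfect_matchings_on T"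
  proof
    fix X assume "X \<in> ?g ` perfect_matchings_on S"
    then obtain M where M: "M \<in> perfect_matchings_on S" "X = ?g M" by auto
    have a: "\<forall>e\<in>M. card e = 2 \<and> e \<subseteq> S" and b: "\<forall>e\<in>M. \<forall>e'\<in>M. e \<noteq> e' \<longrightarrow> e \<inter> e' = {}"
      and c: "\<Union>M = S" using M(1) unfolding perfect_matchings_on_def by auto
    have "card (f ` e) = 2 \<and> f ` e \<subseteq> T" if "e \<in> M" for e
      using that a assms(1,2) inj_on_subset[OF assms(1)] by (auto simp: card_image)
    moreover have "f ` e \<inter> f ` e' = {}" if "e \<in> M" "e' \<in> M" "f ` e \<noteq> f ` e'" for e e'
      using that a b inj_on_image_Int[OF assms(1), of e e'] by (metis image_empty)
    moreover have "\<Union>X = T" using M c assms(2) by (simp add: image_Union[symmetric])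
    ultimately show "X \<in> perfect_matchings_on T"
      unfolding perfect_matchings_on_def using M(2) by auto
  qed
  then show ?thesis
    using card_inj_on_le[OF inj _ finite_perfect_matchings_on[OF assms(3)]] by simp
qed

lemma card_perfect_matchings_on_eq:
  assumes "finite S" "finite T" "card S = card T"
  shows "card (perfect_matchings_on S) = card (perfect_matchings_on T)"
proof -
  obtain f where f: "bij_betw f S T" using assms by (metis bij_betw_iff_card)
  then have "bij_betw (inv_into S f) T S" by (rule bij_betw_inv_into)
  then show ?thesis
    using card_perfect_matchings_on_inj_le[of f S T] card_perfect_matchings_on_inj_le[of "inv_into S f" T S]
      f assms unfolding bij_betw_def by fastforce
qed

lemma insert_perfect_matchings_on:
  assumes "M \<in> perfect_matchings_on (S - {a, c})" "a \<in> S" "c \<in> S" "a \<noteq> c"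
  shows "insert {a, c} M \<in> perfect_matchings_on S"
  using assms unfolding perfect_matchings_on_def by auto

text \<open>Classify the matchings of S by the partner of a: each of the card S - 1 possible partners
  contributes as many matchings as there are on S - {a, b}.\<close>
lemma card_perfect_matchings_on_remove_pair:
  assumes "finite S" "a \<in> S" "b \<in> S" "a \<noteq> b"
  shows "(card S - 1) * card (perfect_matchings_on (S - {a, b})) \<le> card (perfect_matchings_on S)"
proof -
  define Img where "Img c = insert {a, c} ` perfect_matchings_on (S - {a, c})" for c
  have sub: "Img c \<subseteq> perfect_matchings_on S" if "c \<in> S - {a}" for c
    unfolding Img_def using insert_perfect_matchings_on[of _ S a c] that assms(2) by blast
  have card_Img: "card (Img c) = card (perfect_matchings_on (S - {a, b}))" if "c \<in> S - {a}" for c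
  proof -
    have "inj_on (insert {a, c}) (perfect_matchings_on (S - {a, c}))"
    proof (rule inj_onI)
      fix M1 M2 assume M: "M1 \<in> perfect_matchings_on (S - {a, c})" "M2 \<in> perfect_matchings_on (S - {a, c})"
        "insert {a, c} M1 = insert {a, c} M2"
      have "{a, c} \<notin> M1" "{a, c} \<notin> M2" using M(1,2) unfolding perfect_matchings_on_def by auto
      then show "M1 = M2" using M(3) by (metis insert_ident)
    qed
    then have "card (Img c) = card (perfect_matchings_on (S - {a, c}))"
      unfolding Img_def by (simp add: card_image)
    also have "\<dots> = card (perfect_matchings_on (S - {a, b}))"
      by (rule card_perfect_matchings_on_eq) (use assms that in auto)
    finally show ?thesis .
  qed
  have disj: "Img c \<inter> Img c' = {}" if "c \<in> S - {a}" "c' \<in> S - {a}" "c \<noteq> c'" for c c'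
  proof (rule ccontr)
    assume "Img c \<inter> Img c' \<noteq> {}"
    then obtain M1 M2 where M: "M2 \<in> perfect_matchings_on (S - {a, c'})"
      "insert {a, c} M1 = insert {a, c'} M2"
      unfolding Img_def by auto
    have "{a, c} \<noteq> {a, c'}" using that by (metis doubleton_eq_iff)
    then have "{a, c} \<in> M2" using M(2) by blast
    then show False using M(1) unfolding perfect_matchings_on_def by auto
  qed
  have fin: "finite (Img c)" if "c \<in> S - {a}" for c
    using finite_subset[OF sub[OF that] finite_perfect_matchings_on[OF assms(1)]] .
  have "(card S - 1) * card (perfect_matchings_on (S - {a, b})) = (\<Sum>c\<in>S - {a}. card (Img c))"
    using card_Img assms by simp
  also have "\<dots> = card (\<Union>c\<in>S - {a}. Img c)"
    by (rule card_UN_disjoint[symmetric]) (use assms fin disj in auto)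
  also have "\<dots> \<le> card (perfect_matchings_on S)"
    by (rule card_mono[OF finite_perfect_matchings_on[OF assms(1)]]) (use sub in auto)
  finally show ?thesis .
qed

lemma card_perfect_matchings_on_remove:
  "finite S \<Longrightarrow> X \<subseteq> S \<Longrightarrow> card X = 2 * m \<Longrightarrow>
   (\<Prod>j<m. card S - 1 - 2 * j) * card (perfect_matchings_on (S - X)) \<le> card (perfect_matchings_on S)"
proof (induction m arbitrary: S X)
  case 0
  then have "X = {}" using finite_subset by fastforce
  then show ?case by simp
next
  case (Suc m)
  have finX: "finite X" using Suc.prems finite_subset by blast
  obtain Y where "Y \<subseteq> X" "card Y = 2"
    using obtain_subset_with_card_n[of 2 X] Suc.prems(3) by auto
  then obtain a b where ab: "a \<in> X" "b \<in> X" "a \<noteq> b"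
    by (auto simp: card_2_iff)
  define S' where "S' = S - {a, b}"
  define X' where "X' = X - {a, b}"
  have "card X' = 2 * m"
    unfolding X'_def using Suc.prems(3) ab finX by (simp add: card_Diff_subset)
  then have IH: "(\<Prod>j<m. card S' - 1 - 2 * j) * card (perfect_matchings_on (S' - X'))
      \<le> card (perfect_matchings_on S')"
    by (intro Suc.IH) (use Suc.prems in \<open>auto simp: S'_def X'_def\<close>)
  have "S' - X' = S - X" unfolding S'_def X'_def using ab by auto
  have "card S' = card S - 2"
  proof -
    have "{a, b} \<subseteq> S" using Suc.prems(2) ab by auto
    then show ?thesis unfolding S'_def using Suc.prems(1) ab by (simp add: card_Diff_subset)
  qed
  then have "(\<Prod>j<Suc m. card S - 1 - 2 * j) = (card S - 1) * (\<Prod>j<m. card S' - 1 - 2 * j)"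
    unfolding prod.lessThan_Suc_shift by (simp add: algebra_simps)
  then have "(\<Prod>j<Suc m. card S - 1 - 2 * j) * card (perfect_matchings_on (S - X))
      \<le> (card S - 1) * card (perfect_matchings_on S')"
    using IH \<open>S' - X' = S - X\<close> by simp
  also have "\<dots> \<le> card (perfect_matchings_on S)"
    unfolding S'_def by (rule card_perfect_matchings_on_remove_pair) (use Suc.prems ab in auto)
  finally show ?case .
qed

lemma card_perfect_matchings_on_containing_le:
  assumes "finite S" "F \<subseteq> M0" "M0 \<in> perfect_matchings_on S"
  shows "card {M \<in> perfect_matchings_on S. F \<subseteq> M} \<le> card (perfect_matchings_on (S - \<Union>F))"
proof -
  have inj: "inj_on (\<lambda>M. M - F) {M \<in> perfect_matchings_on S. F \<subseteq> M}"
    by (rule inj_onI) auto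
  have into: "(\<lambda>M. M - F) ` {M \<in> perfect_matchings_on S. F \<subseteq> M} \<subseteq> perfect_matchings_on (S - \<Union>F)"
  proof
    fix X assume "X \<in> (\<lambda>M. M - F) ` {M \<in> perfect_matchings_on S. F \<subseteq> M}"
    then obtain M where M: "M \<in> perfect_matchings_on S" "F \<subseteq> M" "X = M - F" by auto
    have a: "\<forall>e\<in>M. card e = 2 \<and> e \<subseteq> S" and b: "\<forall>e\<in>M. \<forall>e'\<in>M. e \<noteq> e' \<longrightarrow> e \<inter> e' = {}"
      and c: "\<Union>M = S" using M(1) unfolding perfect_matchings_on_def by auto
    have d: "e \<inter> \<Union>F = {}" if "e \<in> X" for e
    proof -
      have "e \<in> M" "e \<notin> F" using that M(3) by auto
      then have "e \<inter> f = {}" if "f \<in> F" for f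
        using b M(2) that by (metis subsetD)
      then show ?thesis by auto
    qed
    have p1: "\<forall>e\<in>X. card e = 2 \<and> e \<subseteq> S - \<Union>F" using a d M(3) by blast
    have p2: "\<forall>e\<in>X. \<forall>e'\<in>X. e \<noteq> e' \<longrightarrow> e \<inter> e' = {}" using b M(3) by blast
    have p3: "\<Union>X = S - \<Union>F"
    proof
      show "\<Union>X \<subseteq> S - \<Union>F" using p1 by blast
      show "S - \<Union>F \<subseteq> \<Union>X" using c M(2,3) by blast
    qed
    show "X \<in> perfect_matchings_on (S - \<Union>F)" unfolding perfect_matchings_on_def using p1 p2 p3 by simp
  qed
  show ?thesis using card_inj_on_le[OF inj into finite_perfect_matchings_on] assms by auto
qed

section \<open>The configuration model\<close>

lemma finite_cells: "finite (cells n d)"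
  unfolding cells_def by simp

lemma card_cells: "card (cells n d) = n * d"
  unfolding cells_def by (simp add: card_cartesian_product)

lemma finite_perfect_matchings: "finite (perfect_matchings n d)"
  unfolding perfect_matchings_eq_on_cells by (rule finite_perfect_matchings_on[OF finite_cells])

lemma card_perfect_matchings_containing_mult_le:
  assumes "card F = m"
  shows "card {M \<in> perfect_matchings n d. F \<subseteq> M} * (\<Prod>j<m. n * d - 1 - 2 * j)
    \<le> card (perfect_matchings n d)"
proof (cases "\<exists>M0. M0 \<in> perfect_matchings n d \<and> F \<subseteq> M0")
  case False
  then have "{M \<in> perfect_matchings n d. F \<subseteq> M} = {}" by blast
  then show ?thesis by (simp only: card.empty mult_0 zero_le)
next
  case True
  let ?W = "cells n d"
  obtain M0 where M0: "M0 \<in> perfect_matchings_on ?W" "F \<subseteq> M0"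
    using True perfect_matchings_eq_on_cells by auto
  have a: "\<forall>e\<in>M0. card e = 2 \<and> e \<subseteq> ?W" and b: "\<forall>e\<in>M0. \<forall>e'\<in>M0. e \<noteq> e' \<longrightarrow> e \<inter> e' = {}"
    using M0(1) unfolding perfect_matchings_on_def by auto
  have "card (\<Union>F) = sum card F"
  proof (rule card_Union_disjoint)
    show "pairwise disjnt F" unfolding pairwise_def disjnt_def using b M0(2) by blast
    show "finite A" if "A \<in> F" for A
      using a M0(2) that by (metis card.infinite subsetD zero_neq_numeral)
  qed
  also have "\<dots> = sum (\<lambda>_. 2) F" by (rule sum.cong) (use a M0(2) in auto)
  also have "\<dots> = 2 * m" using assms by simp
  finally have card_UF: "card (\<Union>F) = 2 * m" .
  have "card {M \<in> perfect_matchings_on ?W. F \<subseteq> M} \<le> card (perfect_matchings_on (?W - \<Union>F))"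
    by (rule card_perfect_matchings_on_containing_le[OF finite_cells M0(2) M0(1)])
  moreover have "(\<Prod>j<m. card ?W - 1 - 2 * j) * card (perfect_matchings_on (?W - \<Union>F))
      \<le> card (perfect_matchings_on ?W)"
    by (rule card_perfect_matchings_on_remove[OF finite_cells _ card_UF]) (use a M0(2) in blast)
  ultimately show ?thesis unfolding perfect_matchings_eq_on_cells card_cells
    by (metis (no_types, lifting) dual_order.trans mult.commute mult_le_mono2)
qed

lemma card_perfect_matchings_pos:
  assumes "even (n * d)"
  shows "card (perfect_matchings n d) > 0"
proof -
  let ?W = "cells n d"
  have c: "card ?W = 2 * (n * d div 2)" using assms card_cells by simp
  have "1 \<le> (\<Prod>j<n * d div 2. card ?W - 1 - 2 * j)"
    by (rule prod_ge_1) (use c in auto)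
  moreover have "(\<Prod>j<n * d div 2. card ?W - 1 - 2 * j) * card (perfect_matchings_on (?W - ?W))
      \<le> card (perfect_matchings_on ?W)"
    by (rule card_perfect_matchings_on_remove[OF finite_cells order_refl c])
  moreover have "perfect_matchings_on ({} :: (nat \<times> nat) set) = {{}}"
    unfolding perfect_matchings_on_def by auto
  ultimately show ?thesis unfolding perfect_matchings_eq_on_cells by simp
qed

lemma config_prob_ge:
  assumes "even (n * d)"
    and "real (card {M \<in> perfect_matchings n d. \<not> P M}) \<le> \<delta> * real (card (perfect_matchings n d))"
  shows "config_prob n d P \<ge> 1 - \<delta>"
proof -
  let ?PM = "perfect_matchings n d"
  have pos: "real (card ?PM) > 0" using card_perfect_matchings_pos[OF assms(1)] by simp
  have "card ?PM = card {M \<in> ?PM. P M} + card {M \<in> ?PM. \<not> P M}"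
    using finite_perfect_matchings
    by (subst card_Un_disjoint[symmetric]) (auto intro: arg_cong[where f = card])
  then have "config_prob n d P = 1 - real (card {M \<in> ?PM. \<not> P M}) / real (card ?PM)"
    unfolding config_prob_def using pos by (simp add: field_simps)
  moreover have "real (card {M \<in> ?PM. \<not> P M}) / real (card ?PM) \<le> \<delta>"
    using assms(2) pos by (simp add: divide_le_eq)
  ultimately show ?thesis by simp
qed

section \<open>Bootstrap percolation\<close>

definition edges_within :: "(nat \<times> nat) set set \<Rightarrow> nat set \<Rightarrow> (nat \<times> nat) set set" where
  "edges_within M U = {e \<in> M. e \<subseteq> U \<times> UNIV}"

text \<open>Each of the at least r neighbours of v in W is reached by its own edge, and none of these
  edges lies within U.\<close>
lemma card_edges_within_insert:
  assumes "finite M" "v \<notin> U" "W \<subseteq> U" "card (nbr M v \<inter> W) \<ge> r" "r \<ge> 1"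
  shows "card (edges_within M (insert v U)) \<ge> card (edges_within M U) + r"
proof -
  let ?N = "nbr M v \<inter> W"
  have fin_N: "finite ?N"
  proof (rule ccontr)
    assume "infinite ?N"
    then show False using assms(4,5) by simp
  qed
  define g where "g u = (SOME e. e \<in> M \<and> (\<exists>a b. e = {(v, a), (u, b)}))" for u
  have g: "g u \<in> M \<and> (\<exists>a b. g u = {(v, a), (u, b)})" if "u \<in> ?N" for u
  proof -
    have "\<exists>e. e \<in> M \<and> (\<exists>a b. e = {(v, a), (u, b)})" using that unfolding nbr_def by auto
    then show ?thesis unfolding g_def by (rule someI_ex)
  qed
  have uv: "u \<noteq> v" if "u \<in> ?N" for u using that unfolding nbr_def by auto
  have inj: "inj_on g ?N"
  proof (rule inj_onI)
    fix u u' assume u: "u \<in> ?N" "u' \<in> ?N" "g u = g u'"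
    obtain a b where "g u = {(v, a), (u, b)}" using g[OF u(1)] by blast
    moreover obtain a' b' where "g u' = {(v, a'), (u', b')}" using g[OF u(2)] by blast
    ultimately have "(u, b) \<in> {(v, a'), (u', b')}" using u(3) by auto
    then show "u = u'" using uv[OF u(1)] by auto
  qed
  have new: "g ` ?N \<subseteq> edges_within M (insert v U)"
  proof
    fix e assume "e \<in> g ` ?N"
    then obtain u where u: "u \<in> ?N" "e = g u" by auto
    moreover obtain a b where "g u \<in> M" "g u = {(v, a), (u, b)}" using g[OF u(1)] by blast
    ultimately show "e \<in> edges_within M (insert v U)"
      using assms(3) unfolding edges_within_def by auto
  qed
  have disj: "g ` ?N \<inter> edges_within M U = {}"
  proof (rule ccontr)
    assume "g ` ?N \<inter> edges_within M U \<noteq> {}"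
    then obtain u where u: "u \<in> ?N" "g u \<in> edges_within M U" by auto
    obtain a b where "g u = {(v, a), (u, b)}" using g[OF u(1)] by blast
    then have "(v, a) \<in> U \<times> UNIV" using u(2) unfolding edges_within_def by auto
    then show False using assms(2) by auto
  qed
  have old: "edges_within M U \<subseteq> edges_within M (insert v U)"
    unfolding edges_within_def by auto
  have fin: "finite (edges_within M (insert v U))"
    unfolding edges_within_def using assms(1) by simp
  have "card (edges_within M U) + r \<le> card (edges_within M U) + card (g ` ?N)"
    using card_image[OF inj] assms(4) by simp
  also have "\<dots> = card (edges_within M U \<union> g ` ?N)"
    by (rule card_Un_disjoint[symmetric]) (use finite_subset[OF old fin] fin_N disj in auto)
  also have "\<dots> \<le> card (edges_within M (insert v U))"
    by (rule card_mono[OF fin]) (use new old in auto)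
  finally show ?thesis .
qed

lemma bp_step_iter_Suc_mono: "(bp_step n r M ^^ i) A \<subseteq> (bp_step n r M ^^ Suc i) A"
  unfolding bp_step_def by auto

lemma bp_step_iter_mono: "i \<le> j \<Longrightarrow> (bp_step n r M ^^ i) A \<subseteq> (bp_step n r M ^^ j) A"
proof (induction j)
  case (Suc j)
  then show ?case using bp_step_iter_Suc_mono[of j n r M A] by (metis le_SucE order_refl order_trans)
qed simp

lemma bp_step_iter_subset: "A \<subseteq> {0..<n} \<Longrightarrow> (bp_step n r M ^^ i) A \<subseteq> {0..<n}"
  by (induction i) (auto simp: bp_step_def)

lemma bp_closure_eq_if_stable:
  assumes "(bp_step n r M ^^ Suc i) A = (bp_step n r M ^^ i) A"
  shows "bp_closure n r M A = (bp_step n r M ^^ i) A"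
proof -
  have stable: "(bp_step n r M ^^ j) A = (bp_step n r M ^^ i) A" if "j \<ge> i" for j
    using that
  proof (induction j)
    case (Suc j)
    then show ?case using assms by (metis funpow.simps(2) le_SucE o_apply)
  qed simp
  have "(bp_step n r M ^^ j) A \<subseteq> (bp_step n r M ^^ i) A" for j
    using stable[of j] bp_step_iter_mono[of j i n r M A] by (cases "j \<le> i") auto
  then have "bp_closure n r M A \<subseteq> (bp_step n r M ^^ i) A"
    unfolding bp_closure_def by blast
  then show ?thesis unfolding bp_closure_def by blast
qed

lemma contagious_all: "contagious n r M {0..<n}"
proof -
  have "bp_step n r M {0..<n} = {0..<n}" unfolding bp_step_def by auto
  then have "(bp_step n r M ^^ i) {0..<n} = {0..<n}" for i by (induction i) simp_all
  then show ?thesis unfolding contagious_def bp_closure_def by simp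
qed

lemma min_contagious_witness: "\<exists>A. contagious n r M A \<and> card A = min_contagious n r M"
  unfolding min_contagious_def by (rule LeastI_ex) (use contagious_all in blast)

lemma contagious_next_vertex:
  assumes "contagious n r M A0"
    and "(bp_step n r M ^^ i) A0 \<subseteq> U" "U \<subseteq> (bp_step n r M ^^ Suc i) A0" "U \<noteq> {0..<n}"
  obtains v j where "v \<notin> U" "(bp_step n r M ^^ j) A0 \<subseteq> U"
    "v \<in> (bp_step n r M ^^ Suc j) A0" "insert v U \<subseteq> (bp_step n r M ^^ Suc j) A0"
proof (cases "U = (bp_step n r M ^^ Suc i) A0")
  case False
  then obtain v where v: "v \<in> (bp_step n r M ^^ Suc i) A0" "v \<notin> U" using assms(3) by blast
  show ?thesis by (rule that[of v i]) (use v assms(2,3) in auto)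
next
  case True
  have "(bp_step n r M ^^ Suc (Suc i)) A0 \<noteq> (bp_step n r M ^^ Suc i) A0"
  proof
    assume "(bp_step n r M ^^ Suc (Suc i)) A0 = (bp_step n r M ^^ Suc i) A0"
    then have "bp_closure n r M A0 = U" unfolding True by (rule bp_closure_eq_if_stable)
    then show False using assms(1,4) unfolding contagious_def by simp
  qed
  then obtain v where v: "v \<in> (bp_step n r M ^^ Suc (Suc i)) A0" "v \<notin> U"
    using True bp_step_iter_Suc_mono[of "Suc i" n r M A0] by blast
  show ?thesis
    by (rule that[of v "Suc i"]) (use v True bp_step_iter_Suc_mono[of "Suc i" n r M A0] in auto)
qed

lemma contagious_dense_chain:
  assumes M: "finite M" and con: "contagious n r M A0" and r: "r \<ge> 1"
  shows "t \<le> n - card A0 \<Longrightarrow> \<exists>U i. (bp_step n r M ^^ i) A0 \<subseteq> U \<and> U \<subseteq> (bp_step n r M ^^ Suc i) A0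
           \<and> card U = card A0 + t \<and> card (edges_within M U) \<ge> r * t"
proof (induction t)
  case 0
  show ?case
    by (intro exI[of _ A0] exI[of _ 0]) (use bp_step_iter_Suc_mono[of 0 n r M A0] in auto)
next
  case (Suc t)
  let ?A = "\<lambda>i. (bp_step n r M ^^ i) A0"
  obtain U i where U: "?A i \<subseteq> U" "U \<subseteq> ?A (Suc i)" "card U = card A0 + t"
    "card (edges_within M U) \<ge> r * t"
    using Suc by auto
  have "A0 \<subseteq> {0..<n}" using con unfolding contagious_def by simp
  then have Un: "U \<subseteq> {0..<n}" using U(2) bp_step_iter_subset by blast
  then have finU: "finite U" by (rule finite_subset) simp
  have "card U < n" using U(3) Suc.prems by simp
  then have "U \<noteq> {0..<n}" by auto
  then obtain v j where v: "v \<notin> U" "?A j \<subseteq> U" "v \<in> ?A (Suc j)" "insert v U \<subseteq> ?A (Suc j)"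
    by (rule contagious_next_vertex[OF con U(1,2)])
  have "v \<notin> ?A j" using v(1,2) by blast
  then have "card (nbr M v \<inter> ?A j) \<ge> r" using v(3) unfolding bp_step_def by simp
  then have "card (edges_within M (insert v U)) \<ge> card (edges_within M U) + r"
    by (rule card_edges_within_insert[OF M v(1,2) _ r])
  then have "card (edges_within M (insert v U)) \<ge> r * Suc t" using U(4) by simp
  moreover have "card (insert v U) = card A0 + Suc t" using v(1) finU U(3) by simp
  moreover have "?A j \<subseteq> insert v U" using v(2) by blast
  ultimately show ?case using v(4) by blast
qed

lemma contagious_dense_set:
  assumes "finite M" "contagious n r M A0" "r \<ge> 1" "card A0 \<le> s" "s \<le> n"
  shows "\<exists>U. U \<subseteq> {0..<n} \<and> card U = s \<and> card (edges_within M U) \<ge> r * (s - card A0)"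
proof -
  have "s - card A0 \<le> n - card A0" using assms(5) by simp
  from contagious_dense_chain[OF assms(1-3) this]
  obtain U i where U: "U \<subseteq> (bp_step n r M ^^ Suc i) A0" "card U = card A0 + (s - card A0)"
    "card (edges_within M U) \<ge> r * (s - card A0)"
    by blast
  have "(bp_step n r M ^^ Suc i) A0 \<subseteq> {0..<n}"
    using bp_step_iter_subset assms(2) unfolding contagious_def by blast
  moreover have "card U = s" using U(2) assms(4) by simp
  ultimately show ?thesis using U(1,3) by blast
qed

section \<open>The first-moment bound\<close>

text \<open>Candidate certificates that a small contagious set exists: an s-set U of vertices together
  with m pairs of cells of U, meant to be edges of the matching.\<close>
definition dense_witnesses :: "nat \<Rightarrow> nat \<Rightarrow> nat \<Rightarrow> nat \<Rightarrow> (nat set \<times> (nat \<times> nat) set set) set" where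
  "dense_witnesses n d s m = Sigma {U. U \<subseteq> {0..<n} \<and> card U = s}
     (\<lambda>U. {F. F \<subseteq> {e. e \<subseteq> U \<times> {0..<d} \<and> card e = 2} \<and> card F = m})"

lemma finite_dense_witnesses: "finite (dense_witnesses n d s m)"
proof -
  have "dense_witnesses n d s m \<subseteq> Pow {0..<n} \<times> Pow (Pow ({0..<n} \<times> {0..<d}))"
    unfolding dense_witnesses_def by auto
  then show ?thesis by (rule finite_subset) simp
qed

lemma card_dense_witnesses:
  "card (dense_witnesses n d s m) = (n choose s) * ((s * d choose 2) choose m)"
proof -
  have fin: "finite {e. e \<subseteq> U \<times> {0..<d} \<and> card e = 2}" if "U \<subseteq> {0..<n}" for U
    using that finite_subset by fastforce
  have "card {F. F \<subseteq> {e. e \<subseteq> U \<times> {0..<d} \<and> card e = 2} \<and> card F = m} = (s * d choose 2) choose m"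
    if "U \<subseteq> {0..<n}" "card U = s" for U
  proof -
    have "card {e. e \<subseteq> U \<times> {0..<d} \<and> card e = 2} = card (U \<times> {0..<d}) choose 2"
      by (rule n_subsets) (use that finite_subset in fastforce)
    also have "\<dots> = s * d choose 2" using that by (simp add: card_cartesian_product)
    finally show ?thesis using n_subsets[OF fin[OF that(1)], of m] by simp
  qed
  then have "card (dense_witnesses n d s m)
      = (\<Sum>U\<in>{U. U \<subseteq> {0..<n} \<and> card U = s}. (s * d choose 2) choose m)"
    unfolding dense_witnesses_def using fin by (simp add: card_SigmaI)
  also have "\<dots> = (n choose s) * ((s * d choose 2) choose m)"
    using n_subsets[of "{0..<n}" s] by simp
  finally show ?thesis .
qed

lemma small_contagious_dense_witness:
  assumes M: "M \<in> perfect_matchings n d" and "r \<ge> 1"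
    and "min_contagious n r M \<le> K" "K \<le> s" "s \<le> n" "m \<le> r * (s - K)"
  shows "\<exists>(U, F) \<in> dense_witnesses n d s m. F \<subseteq> M"
proof -
  obtain A0 where A0: "contagious n r M A0" "card A0 = min_contagious n r M"
    using min_contagious_witness by blast
  have a: "\<forall>e\<in>M. card e = 2 \<and> e \<subseteq> cells n d"
    using M unfolding perfect_matchings_def by auto
  then have "M \<subseteq> Pow (cells n d)" by auto
  then have "finite M" by (rule finite_subset) (simp add: finite_cells)
  then obtain U where U: "U \<subseteq> {0..<n}" "card U = s" "card (edges_within M U) \<ge> r * (s - card A0)"
    using contagious_dense_set[OF _ A0(1) \<open>r \<ge> 1\<close>, of s] A0(2) assms(3-5) by auto
  have "r * (s - K) \<le> r * (s - card A0)"
    using A0(2) assms(3) by (intro mult_le_mono2 diff_le_mono2) simp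
  then have "m \<le> card (edges_within M U)" using U(3) assms(6) by linarith
  then obtain F where F: "F \<subseteq> edges_within M U" "card F = m"
    by (meson obtain_subset_with_card_n)
  have "F \<subseteq> M" "F \<subseteq> {e. e \<subseteq> U \<times> {0..<d} \<and> card e = 2}"
    using F(1) a unfolding edges_within_def cells_def by auto
  then show ?thesis unfolding dense_witnesses_def using U F(2) by blast
qed

lemma card_small_contagious_le:
  assumes "r \<ge> 1" "K \<le> s" "s \<le> n" "m \<le> r * (s - K)"
  shows "card {M \<in> perfect_matchings n d. min_contagious n r M \<le> K} * (\<Prod>j<m. n * d - 1 - 2 * j)
    \<le> card (dense_witnesses n d s m) * card (perfect_matchings n d)"
proof -
  let ?PM = "perfect_matchings n d" and ?P = "\<Prod>j<m. n * d - 1 - 2 * j"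
  let ?E = "\<lambda>w. {M \<in> ?PM. snd w \<subseteq> M}"
  have "{M \<in> ?PM. min_contagious n r M \<le> K} \<subseteq> (\<Union>w\<in>dense_witnesses n d s m. ?E w)"
    using small_contagious_dense_witness[OF _ assms(1) _ assms(2-4)] by fastforce
  moreover have "finite (\<Union>w\<in>dense_witnesses n d s m. ?E w)"
    by (rule finite_subset[OF _ finite_perfect_matchings]) auto
  ultimately have "card {M \<in> ?PM. min_contagious n r M \<le> K} \<le> card (\<Union>w\<in>dense_witnesses n d s m. ?E w)"
    by (rule card_mono[rotated])
  also have "\<dots> \<le> (\<Sum>w\<in>dense_witnesses n d s m. card (?E w))"
    by (rule card_UN_le[OF finite_dense_witnesses])
  finally have "card {M \<in> ?PM. min_contagious n r M \<le> K} * ?P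
      \<le> (\<Sum>w\<in>dense_witnesses n d s m. card (?E w)) * ?P"
    by (rule mult_right_mono) simp
  also have "\<dots> = (\<Sum>w\<in>dense_witnesses n d s m. card (?E w) * ?P)"
    by (rule sum_distrib_right)
  also have "\<dots> \<le> (\<Sum>w\<in>dense_witnesses n d s m. card ?PM)"
    by (rule sum_mono, rule card_perfect_matchings_containing_mult_le) (auto simp: dense_witnesses_def)
  finally show ?thesis by simp
qed

lemma power_div_fact_le_exp:
  fixes x :: real
  assumes "x \<ge> 0"
  shows "x ^ k / fact k \<le> exp x"
proof -
  have s: "(\<lambda>n. x ^ n / fact n) sums exp x"
    using exp_converges[of x] by (simp add: divide_inverse mult.commute)
  have "(\<Sum>n\<in>{k}. x ^ n / fact n) \<le> exp x"
    using sum_le_suminf[OF sums_summable[OF s], of "{k}"] assms sums_unique[OF s] by simp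
  then show ?thesis by simp
qed

lemma binomial_le_exp_ratio_power:
  assumes "k > 0"
  shows "real (n choose k) \<le> (exp 1 * real n / real k) ^ k"
proof -
  have "real (n choose k) * fact k \<le> real n ^ k"
    using binomial_fact_pow[of n k] by (metis of_nat_fact of_nat_le_iff of_nat_mult of_nat_power)
  then have "real (n choose k) \<le> real n ^ k / fact k"
    by (simp add: field_simps)
  also have "\<dots> \<le> real n ^ k / (real k ^ k / exp (real k))"
  proof (rule divide_left_mono)
    show "real k ^ k / exp (real k) \<le> fact k"
      using power_div_fact_le_exp[of "real k" k] by (simp add: field_simps)
  qed (use assms in auto)
  also have "\<dots> = (exp 1 * real n / real k) ^ k"
  proof -
    have "exp (real k) = exp 1 ^ k" by (metis exp_of_nat_mult mult.right_neutral)
    then show ?thesis using assms by (simp add: power_mult_distrib power_divide field_simps)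
  qed
  finally show ?thesis .
qed

lemma prod_odd_gaps_ge:
  fixes N m :: nat
  assumes "4 * m \<le> N"
  shows "(real N / 2) ^ m \<le> (\<Prod>j<m. real (N - 1 - 2 * j))"
proof -
  have "(\<Prod>j<m. real N / 2) \<le> (\<Prod>j<m. real (N - 1 - 2 * j))"
  proof (rule prod_mono)
    fix j assume "j \<in> {..<m}"
    then have "4 * j + 4 \<le> N" using assms by simp
    then show "0 \<le> real N / 2 \<and> real N / 2 \<le> real (N - 1 - 2 * j)" by (simp add: of_nat_diff)
  qed
  then show ?thesis by simp
qed

lemma card_dense_witnesses_le:
  fixes n d K L r :: nat
  assumes K: "K \<ge> 1" and L: "L \<ge> 2" and r: "r \<ge> 2" and fits: "4 * (r * (L - 1) * K) \<le> n * d"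
    and n: "n \<ge> 1" and d: "d \<ge> 1"
  shows "real (card (dense_witnesses n d (L * K) (r * (L - 1) * K)))
    \<le> ((exp 1 * real n / (real L * real K)) ^ L
        * (exp 1 * real L ^ 2 * real K * real d / (real r * real (L - 1) * real n)) ^ (r * (L - 1))) ^ K
      * (\<Prod>j<r * (L - 1) * K. real (n * d - 1 - 2 * j))"
proof -
  define s where "s = L * K"
  define m where "m = r * (L - 1) * K"
  define B1 where "B1 = exp 1 * real n / (real L * real K)"
  define B2 where "B2 = exp 1 * real L ^ 2 * real K * real d / (real r * real (L - 1) * real n)"
  have s_pos: "s > 0" using K L unfolding s_def by simp
  have m_pos: "m > 0" using K L r unfolding m_def by simp
  have pairs: "real (s * d choose 2) \<le> (real s * real d) ^ 2 / 2"
  proof -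
    have "2 * (s * d choose 2) = 2 * ((s * d) * (s * d - 1) div 2)" by (simp add: choose_two)
    also have "\<dots> \<le> (s * d) * (s * d - 1)" by simp
    also have "\<dots> \<le> (s * d) * (s * d)" by simp
    finally have "2 * real (s * d choose 2) \<le> real (s * d) * real (s * d)"
      by (metis of_nat_le_iff of_nat_mult of_nat_numeral)
    then show ?thesis by (simp add: power2_eq_square)
  qed
  have eq1: "(exp 1 * real n / real s) ^ s = (B1 ^ L) ^ K"
    unfolding B1_def s_def by (simp add: power_mult[symmetric] mult.commute)
  have "real (L - 1) > 0" using L by simp
  then have eq2: "exp 1 * ((real s * real d) ^ 2 / 2) / real m = B2 * (real (n * d) / 2)"
    unfolding B2_def s_def m_def using K n d r by (simp add: field_simps power2_eq_square)
  have eq3: "(B2 * (real (n * d) / 2)) ^ m = (B2 ^ (r * (L - 1))) ^ K * (real (n * d) / 2) ^ m"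
    by (subst power_mult_distrib) (simp only: m_def power_mult)
  have "real ((s * d choose 2) choose m) \<le> (exp 1 * real (s * d choose 2) / real m) ^ m"
    by (rule binomial_le_exp_ratio_power[OF m_pos])
  also have "\<dots> \<le> (exp 1 * ((real s * real d) ^ 2 / 2) / real m) ^ m"
    by (intro power_mono divide_right_mono) (use pairs in auto)
  finally have choose_pairs: "real ((s * d choose 2) choose m)
      \<le> (exp 1 * ((real s * real d) ^ 2 / 2) / real m) ^ m" .
  have "real (n choose s) * real ((s * d choose 2) choose m)
      \<le> (exp 1 * real n / real s) ^ s * (exp 1 * ((real s * real d) ^ 2 / 2) / real m) ^ m"
    by (rule mult_mono[OF binomial_le_exp_ratio_power[OF s_pos] choose_pairs]) auto
  also have "\<dots> = (B1 ^ L * B2 ^ (r * (L - 1))) ^ K * (real (n * d) / 2) ^ m"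
    unfolding eq1 eq2 eq3 by (simp add: power_mult_distrib)
  also have "\<dots> \<le> (B1 ^ L * B2 ^ (r * (L - 1))) ^ K * (\<Prod>j<m. real (n * d - 1 - 2 * j))"
    by (rule mult_left_mono) (use prod_odd_gaps_ge[of m "n * d"] fits in \<open>auto simp: m_def B1_def B2_def\<close>)
  finally show ?thesis
    unfolding card_dense_witnesses s_def m_def B1_def B2_def by simp
qed

lemma block_exponent_le:
  fixes r L :: nat and \<epsilon> :: real
  assumes "r \<ge> 2" "L \<ge> 2"
    and "\<epsilon> * ((real r - 1) * real L - real r) \<ge> real r / (real r - 1) + 1"
  shows "real (r * (L - 1)) - (real r / (real r - 1) + \<epsilon>) * real (r * (L - 1) - L) \<le> -1"
proof -
  have "L \<le> r * (L - 1)"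
    using assms(1,2) mult_le_mono1[of 2 r "L - 1"] by linarith
  then have q: "real (r * (L - 1) - L) = (real r - 1) * real L - real r"
    using assms(2) by (simp add: of_nat_diff algebra_simps)
  have R: "real (r * (L - 1)) = real r * real L - real r"
    using assms(2) by (simp add: of_nat_diff algebra_simps)
  have "real r * real L - real r - real r / (real r - 1) * ((real r - 1) * real L - real r)
      = real r / (real r - 1)"
    using assms(1) by (simp add: field_simps)
  then show ?thesis unfolding q R using assms(3) by (simp add: algebra_simps)
qed

text \<open>With y = K/n the K-th root of the first-moment bound: all powers of y cancel down to
  y^(r(L-1)-L), and y \<le> d^-(r/(r-1)+\<epsilon>) then beats the d^(r(L-1)) coming from the pair count.\<close>
lemma first_moment_base_le_half:
  fixes r L :: nat and \<epsilon> d y :: real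
  assumes r: "r \<ge> 2" and L: "L \<ge> 2"
    and Lc: "\<epsilon> * ((real r - 1) * real L - real r) \<ge> real r / (real r - 1) + 1"
    and d: "d \<ge> 1" "d \<ge> 2 * (exp 1 ^ L * (exp 1 * real L ^ 2) ^ (r * (L - 1)))"
    and y: "0 < y" "y \<le> d powr (- (real r / (real r - 1) + \<epsilon>))"
  shows "(exp 1 / (real L * y)) ^ L
      * (exp 1 * real L ^ 2 * y * d / (real r * real (L - 1))) ^ (r * (L - 1)) \<le> 1 / 2"
proof -
  define R where "R = r * (L - 1)"
  define q where "q = R - L"
  define \<alpha> where "\<alpha> = real r / (real r - 1) + \<epsilon>"
  define C where "C = exp 1 ^ L * (exp 1 * real L ^ 2) ^ R"
  have "L \<le> R" unfolding R_def using r L mult_le_mono1[of 2 r "L - 1"] by linarith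
  then have R_eq: "R = q + L" unfolding q_def by simp
  have "1 \<le> r * (L - 1)" using r L by simp
  then have denom: "1 \<le> real r * real (L - 1)" by (metis of_nat_1 of_nat_le_iff of_nat_mult)
  have "exp 1 * real L ^ 2 * y * d \<ge> 0" using y(1) d(1) by simp
  from frac_le[OF this order_refl zero_less_one denom]
  have "exp 1 * real L ^ 2 * y * d / (real r * real (L - 1)) \<le> exp 1 * real L ^ 2 * y * d / 1" .
  then have shrink: "exp 1 * real L ^ 2 * y * d / (real r * real (L - 1)) \<le> exp 1 * real L ^ 2 * y * d"
    by simp
  have "(exp 1 / (real L * y)) ^ L * (exp 1 * real L ^ 2 * y * d / (real r * real (L - 1))) ^ R
      \<le> (exp 1 / y) ^ L * (exp 1 * real L ^ 2 * y * d) ^ R"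
    using L y(1) d(1) shrink by (intro mult_mono power_mono) (auto simp: frac_le)
  also have "\<dots> = C * d ^ R * y ^ q"
    unfolding C_def R_eq using y(1) by (simp add: power_mult_distrib power_add power_divide field_simps)
  also have "\<dots> \<le> C * d ^ R * (d powr (- \<alpha>)) ^ q"
    using y d(1) unfolding \<alpha>_def C_def by (intro mult_left_mono power_mono) auto
  also have "\<dots> = C * d powr (real R - \<alpha> * real q)"
  proof -
    have "d ^ R = d powr real R" using d(1) by (simp add: powr_realpow)
    moreover have "(d powr (- \<alpha>)) ^ q = d powr (real q * (- \<alpha>))" using d(1) by (simp add: powr_power)
    ultimately show ?thesis by (simp add: powr_add[symmetric] algebra_simps)
  qed
  also have "\<dots> \<le> C * d powr (-1)"
    using block_exponent_le[OF r L Lc] d(1) unfolding C_def R_def q_def \<alpha>_def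
    by (intro mult_left_mono powr_mono) auto
  also have "\<dots> \<le> 1 / 2"
    using d unfolding C_def R_def by (simp add: powr_minus field_simps)
  finally show ?thesis unfolding R_def .
qed

lemma card_dense_witnesses_le_half_power:
  fixes r L n d K :: nat and \<epsilon> :: real
  assumes r: "r \<ge> 2" and L: "L \<ge> 2"
    and Lc: "\<epsilon> * ((real r - 1) * real L - real r) \<ge> real r / (real r - 1) + 1"
    and d: "real d \<ge> 1" "real d \<ge> 2 * (exp 1 ^ L * (exp 1 * real L ^ 2) ^ (r * (L - 1)))"
    and K: "K \<ge> 1" "real K \<le> real n * real d powr (- (real r / (real r - 1) + \<epsilon>))"
    and fits: "4 * (r * (L - 1) * K) \<le> n * d"
  shows "real (card (dense_witnesses n d (L * K) (r * (L - 1) * K)))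
    \<le> (1 / 2) ^ K * (\<Prod>j<r * (L - 1) * K. real (n * d - 1 - 2 * j))"
proof -
  have n: "n \<ge> 1" using K by (cases n) auto
  define y where "y = real K / real n"
  have y: "0 < y" "y \<le> real d powr (- (real r / (real r - 1) + \<epsilon>))"
    using K n unfolding y_def by (auto simp: field_simps)
  define B where "B = (exp 1 * real n / (real L * real K)) ^ L
    * (exp 1 * real L ^ 2 * real K * real d / (real r * real (L - 1) * real n)) ^ (r * (L - 1))"
  have "B = (exp 1 / (real L * y)) ^ L
      * (exp 1 * real L ^ 2 * y * real d / (real r * real (L - 1))) ^ (r * (L - 1))"
    unfolding B_def y_def using n K by (simp add: field_simps)
  also have "\<dots> \<le> 1 / 2" by (rule first_moment_base_le_half[OF r L Lc d y])
  finally have "B ^ K \<le> (1 / 2) ^ K" by (rule power_mono) (simp add: B_def)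
  moreover have "real (card (dense_witnesses n d (L * K) (r * (L - 1) * K)))
      \<le> B ^ K * (\<Prod>j<r * (L - 1) * K. real (n * d - 1 - 2 * j))"
    unfolding B_def by (rule card_dense_witnesses_le[OF K(1) L r fits n]) (use d in simp)
  ultimately show ?thesis by (meson mult_right_mono order_trans prod_nonneg of_nat_0_le_iff)
qed

section \<open>Choosing K, L and d\<close>

lemma block_fits:
  fixes r L n d K :: nat and \<alpha> :: real
  assumes "\<alpha> \<ge> 1" "real d \<ge> 4 * real r * real L" "r \<ge> 1" "L \<ge> 1"
    and "real K \<le> real n * real d powr (- \<alpha>)"
  shows "4 * r * (L * K) \<le> n"
proof -
  have "1 \<le> 4 * r * L" using assms(3,4) by simp
  then have "(1 :: real) \<le> 4 * real r * real L" by (metis of_nat_1 of_nat_le_iff of_nat_mult of_nat_numeral)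
  then have d: "real d \<ge> 1" using assms(2) by linarith
  have "real d powr (- \<alpha>) \<le> real d powr (- 1)" using assms(1) d by (intro powr_mono) auto
  then have "real K \<le> real n * real d powr (- 1)"
    using assms(5) mult_left_mono[of _ _ "real n"] by (meson of_nat_0_le_iff order_trans)
  then have "real K \<le> real n / real d" using d by (simp add: powr_minus divide_inverse)
  then have "real K * real d \<le> real n" using d by (simp add: le_divide_eq)
  moreover have "4 * real r * real L * real K \<le> real d * real K"
    using assms(2) by (intro mult_right_mono) auto
  ultimately have "real (4 * r * (L * K)) \<le> real n" by (simp add: mult.commute mult.left_commute)
  then show ?thesis by (simp only: of_nat_le_iff)
qed

lemma config_prob_min_contagious_ge:
  fixes r L n d K :: nat and \<epsilon> \<delta> :: real
  assumes r: "r \<ge> 2" and L: "L \<ge> 2" and "\<epsilon> > 0"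
    and Lc: "\<epsilon> * ((real r - 1) * real L - real r) \<ge> real r / (real r - 1) + 1"
    and dC: "real d \<ge> 2 * (exp 1 ^ L * (exp 1 * real L ^ 2) ^ (r * (L - 1)))"
    and dL: "real d \<ge> 4 * real r * real L"
    and K_def: "K = nat \<lfloor>real n * real d powr (- (real r / (real r - 1) + \<epsilon>))\<rfloor>"
    and K: "K \<ge> 1" "(1 / 2) ^ K \<le> \<delta>"
    and even: "even (n * d)"
  shows "config_prob n d (\<lambda>M. real (min_contagious n r M)
                  \<ge> real n * real d powr (- (real r / (real r - 1) + \<epsilon>))) \<ge> 1 - \<delta>"
proof -
  define \<alpha> where "\<alpha> = real r / (real r - 1) + \<epsilon>"
  define s where "s = L * K"
  define m where "m = r * (L - 1) * K"
  define P where "P = (\<Prod>j<m. real (n * d - 1 - 2 * j))"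
  let ?PM = "perfect_matchings n d"
  let ?Small = "{M \<in> ?PM. min_contagious n r M \<le> K}"
  have K_le: "real K \<le> real n * real d powr (- \<alpha>)"
    unfolding K_def \<alpha>_def by (rule of_nat_floor) simp
  have "real r / (real r - 1) \<ge> 1" using r by (simp add: field_simps)
  then have "\<alpha> \<ge> 1" using \<open>\<epsilon> > 0\<close> unfolding \<alpha>_def by linarith
  then have fits: "4 * r * s \<le> n" unfolding s_def using r L by (intro block_fits[OF _ dL _ _ K_le]) auto
  have "4 * real r * real L > 0" using r L by simp
  then have "real d > 0" using dL by linarith
  then have "d \<ge> 1" by simp
  have "1 \<le> 4 * r" using r by simp
  then have "1 * s \<le> 4 * r * s" by (rule mult_le_mono1)
  then have "s \<le> n" using fits by linarith
  have "s > 0" using K L unfolding s_def by simp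
  have "4 * m \<le> 4 * r * s" unfolding m_def s_def by simp
  also have "\<dots> \<le> n * 1" using fits by simp
  also have "\<dots> \<le> n * d" using \<open>d \<ge> 1\<close> by (rule mult_le_mono2)
  finally have "4 * m \<le> n * d" .
  have "n * d > 0" using \<open>s \<le> n\<close> \<open>s > 0\<close> \<open>d \<ge> 1\<close> by simp
  then have P_pos: "P > 0" unfolding P_def using prod_odd_gaps_ge[OF \<open>4 * m \<le> n * d\<close>]
    by (meson order_less_le_trans zero_less_power divide_pos_pos of_nat_0_less_iff zero_less_numeral)
  have m_le: "m \<le> r * (s - K)" unfolding m_def s_def by (simp add: diff_mult_distrib)
  have "card ?Small * (\<Prod>j<m. n * d - 1 - 2 * j) \<le> card (dense_witnesses n d s m) * card ?PM"
    by (rule card_small_contagious_le) (use r L \<open>s \<le> n\<close> m_le in \<open>simp_all add: s_def\<close>)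
  then have count: "real (card ?Small) * P \<le> real (card (dense_witnesses n d s m)) * real (card ?PM)"
    unfolding P_def by (simp only: of_nat_prod[symmetric] of_nat_mult[symmetric] of_nat_le_iff)
  have "real (card (dense_witnesses n d s m)) \<le> (1 / 2) ^ K * P"
    unfolding s_def m_def P_def
    by (rule card_dense_witnesses_le_half_power[OF r L Lc _ dC K(1) K_le[unfolded \<alpha>_def]])
       (use \<open>d \<ge> 1\<close> \<open>4 * m \<le> n * d\<close> in \<open>simp_all add: m_def\<close>)
  also have "\<dots> \<le> \<delta> * P" using K(2) P_pos by (intro mult_right_mono) simp_all
  finally have "real (card (dense_witnesses n d s m)) * real (card ?PM) \<le> \<delta> * P * real (card ?PM)"
    by (rule mult_right_mono) simp
  with count have "P * real (card ?Small) \<le> P * (\<delta> * real (card ?PM))"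
    by (simp only: ac_simps)
  with P_pos have small: "real (card ?Small) \<le> \<delta> * real (card ?PM)" by simp
  have "{M \<in> ?PM. \<not> real (min_contagious n r M) \<ge> real n * real d powr (- \<alpha>)} \<subseteq> ?Small"
    unfolding K_def \<alpha>_def by (auto intro: le_nat_floor)
  then have "card {M \<in> ?PM. \<not> real (min_contagious n r M) \<ge> real n * real d powr (- \<alpha>)} \<le> card ?Small"
    by (rule card_mono[OF finite_subset[OF _ finite_perfect_matchings], rotated]) auto
  with small have "real (card {M \<in> ?PM. \<not> real (min_contagious n r M) \<ge> real n * real d powr (- \<alpha>)})
      \<le> \<delta> * real (card ?PM)"
    by linarith
  then show ?thesis unfolding \<alpha>_def by (rule config_prob_ge[OF even])
qed

lemma block_length_exists:
  fixes r :: nat and \<epsilon> :: real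
  assumes r: "r \<ge> 2" and "\<epsilon> > 0"
  shows "\<exists>L\<ge>2. \<epsilon> * ((real r - 1) * real L - real r) \<ge> real r / (real r - 1) + 1"
proof -
  define A where "A = (real r / (real r - 1) + 1) / (\<epsilon> * (real r - 1))"
  have "real r - 1 > 0" using r by simp
  then have "A > 0" unfolding A_def using \<open>\<epsilon> > 0\<close> by (intro divide_pos_pos add_pos_pos mult_pos_pos) simp_all
  obtain L :: nat where L: "A + real r \<le> real L" using real_arch_simple by blast
  have "(real r - 1) * (A + real r) - real r \<le> (real r - 1) * real L - real r"
    using L r by (intro diff_right_mono mult_left_mono) auto
  moreover have "(real r - 1) * A \<le> (real r - 1) * (A + real r) - real r"
    using r by (simp add: algebra_simps)
  moreover have "\<epsilon> * ((real r - 1) * A) = real r / (real r - 1) + 1"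
  proof -
    have "\<epsilon> * (real r - 1) \<noteq> 0" using \<open>real r - 1 > 0\<close> \<open>\<epsilon> > 0\<close> by simp
    then show ?thesis unfolding A_def by (simp add: mult.assoc[symmetric])
  qed
  ultimately have "\<epsilon> * ((real r - 1) * real L - real r) \<ge> real r / (real r - 1) + 1"
    using \<open>\<epsilon> > 0\<close> by (smt (verit) mult_left_mono)
  moreover have "L \<ge> 2" using L r \<open>A > 0\<close> by linarith
  ultimately show ?thesis by blast
qed

lemma floor_mult_eventually_ge:
  fixes c :: real
  assumes "c > 0"
  shows "\<exists>N. \<forall>n\<ge>N. k \<le> nat \<lfloor>real n * c\<rfloor>"
proof (intro exI allI impI)
  fix n assume "nat \<lceil>real k / c\<rceil> \<le> n"
  then have "real k / c \<le> real n" by linarith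
  then have "real k \<le> real n * c" using assms by (simp add: divide_le_eq)
  then show "k \<le> nat \<lfloor>real n * c\<rfloor>" by (simp add: le_nat_floor)
qed

lemma config_prob_min_contagious_eventually_ge:
  fixes r L d :: nat and \<epsilon> \<delta> :: real
  assumes r: "r \<ge> 2" and L: "L \<ge> 2" and "\<epsilon> > 0"
    and Lc: "\<epsilon> * ((real r - 1) * real L - real r) \<ge> real r / (real r - 1) + 1"
    and dC: "real d \<ge> 2 * (exp 1 ^ L * (exp 1 * real L ^ 2) ^ (r * (L - 1)))"
    and dL: "real d \<ge> 4 * real r * real L"
    and "\<delta> > 0"
  shows "\<exists>N. \<forall>n\<ge>N. even (n * d) \<longrightarrow>
           config_prob n d (\<lambda>M. real (min_contagious n r M)
              \<ge> real n * real d powr (- (real r / (real r - 1) + \<epsilon>))) \<ge> 1 - \<delta>"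
proof -
  obtain k where k: "(1 / 2 :: real) ^ k < \<delta>" using real_arch_pow_inv[OF \<open>\<delta> > 0\<close>, of "1 / 2"] by auto
  have "4 * real r * real L > 0" using r L by simp
  then have "real d > 0" using dL by linarith
  then have "real d powr (- (real r / (real r - 1) + \<epsilon>)) > 0" by simp
  then obtain N where N: "\<forall>n\<ge>N. k + 1 \<le> nat \<lfloor>real n * real d powr (- (real r / (real r - 1) + \<epsilon>))\<rfloor>"
    using floor_mult_eventually_ge by blast
  show ?thesis
  proof (intro exI[of _ N] allI impI)
    fix n assume "n \<ge> N" and even: "even (n * d)"
    define K where "K = nat \<lfloor>real n * real d powr (- (real r / (real r - 1) + \<epsilon>))\<rfloor>"
    have "k + 1 \<le> K" using N \<open>n \<ge> N\<close> unfolding K_def by blast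
    then have "(1 / 2 :: real) ^ K \<le> (1 / 2) ^ k" by (intro power_decreasing) simp_all
    then have "(1 / 2 :: real) ^ K \<le> \<delta>" using k by linarith
    then show "config_prob n d (\<lambda>M. real (min_contagious n r M)
              \<ge> real n * real d powr (- (real r / (real r - 1) + \<epsilon>))) \<ge> 1 - \<delta>"
      using config_prob_min_contagious_ge[OF r L \<open>\<epsilon> > 0\<close> Lc dC dL K_def _ _ even] \<open>k + 1 \<le> K\<close>
      by simp
  qed
qed

theorem mainTheorem19:
  fixes r :: nat and \<epsilon> :: real
  assumes "r \<ge> 2" and "\<epsilon> > 0"
  shows "\<exists>d0::nat. \<forall>d::nat. d > d0 \<longrightarrow>
           (\<forall>\<delta>>0. \<exists>N. \<forall>n\<ge>N. even (n * d) \<longrightarrow>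
              config_prob n d (\<lambda>M. real (min_contagious n r M)
                  \<ge> real n * real d powr (- (real r / (real r - 1) + \<epsilon>))) \<ge> 1 - \<delta>)"
proof -
  obtain L where L: "L \<ge> 2" "\<epsilon> * ((real r - 1) * real L - real r) \<ge> real r / (real r - 1) + 1"
    using block_length_exists[OF assms] by blast
  define C where "C = exp 1 ^ L * (exp 1 * real L ^ 2) ^ (r * (L - 1))"
  show ?thesis
  proof (rule exI[of _ "nat \<lceil>2 * C\<rceil> + 4 * r * L"], intro allI impI)
    fix d :: nat and \<delta> :: real
    assume d: "nat \<lceil>2 * C\<rceil> + 4 * r * L < d" and "\<delta> > 0"
    then have dC: "real d \<ge> 2 * C" by linarith
    have "4 * r * L \<le> d" using d by simp
    then have "real d \<ge> 4 * real r * real L" by (metis of_nat_le_iff of_nat_mult of_nat_numeral)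
    with dC show "\<exists>N. \<forall>n\<ge>N. even (n * d) \<longrightarrow> config_prob n d (\<lambda>M. real (min_contagious n r M)
                  \<ge> real n * real d powr (- (real r / (real r - 1) + \<epsilon>))) \<ge> 1 - \<delta>"
      unfolding C_def by (rule config_prob_min_contagious_eventually_ge[OF assms(1) L(1) assms(2) L(2) _ _ \<open>\<delta> > 0\<close>])
  qed
qed

end
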